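(* Let $X$ and $Y$ be $\omega$ type $P$-spaces. Then the product topology of $\Sigma\mathcal O(X)$ and $\Sigma\mathcal O(Y)$ coincides with the Scott topology of the product poset $\mathcal O(X)\times\mathcal O(Y)$, i.e. $\Sigma\mathcal O(X)\times\Sigma\mathcal O(Y)=\Sigma(\mathcal O(X)\times\mathcal O(Y))$.
   Context: $\mathcal O(X)$ is the lattice of open subsets of $X$ ordered by inclusion; for a poset $L$, $\Sigma L$ denotes $L$ with the Scott topology (a set $U$ is Scott open iff it is an upper set and for every directed $D$ with existing supremum, $\bigvee D\in U$ implies $D\cap U\neq\emptyset$); $\mathcal O(X)\times\mathcal O(Y)$ has the coordinatewise order. A topological space is an $\omega$ type space if it has a subbase consisting of countable subsets. A space is a $P$-space if the intersection of any countable family of open sets is open. *)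

theory Defs
  imports "HOL-Analysis.Analysis"
begin

definition subbase_of :: "'a topology \<Rightarrow> 'a set set \<Rightarrow> bool" where
  "subbase_of X S \<longleftrightarrow>
     (\<forall>A\<in>S. openin X A) \<and>
     topology (arbitrary union_of (finite intersection_of (\<lambda>A. A \<in> S) relative_to topspace X)) = X"

definition omega_type_space :: "'a topology \<Rightarrow> bool" where
  "omega_type_space X \<longleftrightarrow> (\<exists>S. subbase_of X S \<and> (\<forall>A\<in>S. countable A))"

definition P_space :: "'a topology \<Rightarrow> bool" where
  "P_space X \<longleftrightarrow>
     (\<forall>\<F>. countable \<F> \<and> \<F> \<noteq> {} \<and> (\<forall>U\<in>\<F>. openin X U) \<longrightarrow> openin X (\<Inter>\<F>))"

definition directed_in :: "'c set \<Rightarrow> ('c \<Rightarrow> 'c \<Rightarrow> bool) \<Rightarrow> 'c set \<Rightarrow> bool" where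
  "directed_in L le D \<longleftrightarrow> D \<subseteq> L \<and> D \<noteq> {} \<and>
     (\<forall>x\<in>D. \<forall>y\<in>D. \<exists>z\<in>D. le x z \<and> le y z)"

definition is_lub_in :: "'c set \<Rightarrow> ('c \<Rightarrow> 'c \<Rightarrow> bool) \<Rightarrow> 'c set \<Rightarrow> 'c \<Rightarrow> bool" where
  "is_lub_in L le D s \<longleftrightarrow> s \<in> L \<and> (\<forall>x\<in>D. le x s) \<and>
     (\<forall>u\<in>L. (\<forall>x\<in>D. le x u) \<longrightarrow> le s u)"

definition scott_open :: "'c set \<Rightarrow> ('c \<Rightarrow> 'c \<Rightarrow> bool) \<Rightarrow> 'c set \<Rightarrow> bool" where
  "scott_open L le U \<longleftrightarrow> U \<subseteq> L \<and>
     (\<forall>x\<in>U. \<forall>y\<in>L. le x y \<longrightarrow> y \<in> U) \<and>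
     (\<forall>D s. directed_in L le D \<and> is_lub_in L le D s \<and> s \<in> U \<longrightarrow> D \<inter> U \<noteq> {})"

definition scott_topology :: "'c set \<Rightarrow> ('c \<Rightarrow> 'c \<Rightarrow> bool) \<Rightarrow> 'c topology" where
  "scott_topology L le = topology (scott_open L le)"

definition opens :: "'a topology \<Rightarrow> 'a set set" where
  "opens X = {U. openin X U}"

end

theory Submission imports Defs begin

(* In a P-space every point x of a countable open set A has an open least neighbourhood: it
   is the intersection of A with countably many opens, one omitting each point of A outside it.
   In an omega type space every point lies in a countable subbase member or has the whole space
   as its only neighbourhood, so omega type P-spaces are Alexandrov spaces. For an Alexandrov
   space X, each open U is the directed union of the opens generated by the finite subsets F
   of U, and the opens containing a finite F form a Scott open subset of O(X). Hence a Scott open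
   subset of O(X) x O(Y) contains a product of Scott open sets around each of its points; the
   converse holds for products of arbitrary posets. *)

definition least_nbhd :: "'a topology \<Rightarrow> 'a \<Rightarrow> 'a set" where
  "least_nbhd X x = \<Inter>{U. openin X U \<and> x \<in> U}"

(* Equivalent to openness of all nonempty intersections of opens. The guard matters:
   least_nbhd X x = UNIV for x outside topspace X. *)
definition alexandrov_space :: "'a topology \<Rightarrow> bool" where
  "alexandrov_space X \<longleftrightarrow> (\<forall>x\<in>topspace X. openin X (least_nbhd X x))"

lemma in_least_nbhd: "x \<in> least_nbhd X x"
  unfolding least_nbhd_def by blast

lemma least_nbhd_subset: "openin X U \<Longrightarrow> x \<in> U \<Longrightarrow> least_nbhd X x \<subseteq> U"
  unfolding least_nbhd_def by blast

lemma openin_least_nbhd_if_countable_nbhd: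
  assumes "P_space X" and A: "openin X A" "countable A" "x \<in> A"
  shows "openin X (least_nbhd X x)"
proof -
  have "\<exists>U. openin X U \<and> x \<in> U \<and> y \<notin> U" if "y \<in> A - least_nbhd X x" for y
    using that unfolding least_nbhd_def by blast
  then obtain sep where sep: "\<And>y. y \<in> A - least_nbhd X x \<Longrightarrow>
      openin X (sep y) \<and> x \<in> sep y \<and> y \<notin> sep y"
    by metis
  define \<F> where "\<F> = insert A (sep ` (A - least_nbhd X x))"
  have \<F>: "openin X U \<and> x \<in> U" if "U \<in> \<F>" for U
    using that A sep unfolding \<F>_def by blast
  have "countable \<F>" "\<F> \<noteq> {}"
    using \<open>countable A\<close> unfolding \<F>_def by auto
  with \<F> have "openin X (\<Inter>\<F>)"
    using \<open>P_space X\<close> unfolding P_space_def by blast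
  moreover have "\<Inter>\<F> = least_nbhd X x"
  proof
    show "\<Inter>\<F> \<subseteq> least_nbhd X x"
      unfolding \<F>_def using sep by blast
    show "least_nbhd X x \<subseteq> \<Inter>\<F>"
      using \<F> least_nbhd_subset by (meson Inter_greatest)
  qed
  ultimately show ?thesis by simp
qed

lemma subbase_of_local_basis:
  assumes "subbase_of X S" "openin X U" "x \<in> U"
  obtains F where "finite F" "F \<subseteq> S" "x \<in> \<Inter>F" "topspace X \<inter> \<Inter>F \<subseteq> U"
proof -
  have "(arbitrary union_of (finite intersection_of (\<lambda>A. A \<in> S) relative_to topspace X)) U"
    using assms(1,2) openin_subbase unfolding subbase_of_def by metis
  then obtain \<B> where "\<Union>\<B> = U"
    and \<B>: "\<And>B. B \<in> \<B> \<Longrightarrow> \<exists>F. finite F \<and> F \<subseteq> S \<and> B = topspace X \<inter> \<Inter>F"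
    unfolding union_of_def intersection_of_def relative_to_def
    by (auto simp: subset_iff) metis
  then obtain B where "B \<in> \<B>" "x \<in> B"
    using assms(3) by auto
  then obtain F where "finite F" "F \<subseteq> S" "B = topspace X \<inter> \<Inter>F"
    using \<B> by blast
  moreover have "B \<subseteq> U"
    using \<open>B \<in> \<B>\<close> \<open>\<Union>\<B> = U\<close> by blast
  ultimately show ?thesis
    using \<open>x \<in> B\<close> by (intro that[of F]) auto
qed

lemma omega_type_P_space_imp_alexandrov_space:
  assumes "omega_type_space X" "P_space X"
  shows "alexandrov_space X"
  unfolding alexandrov_space_def
proof
  fix x assume x: "x \<in> topspace X"
  obtain S where S: "subbase_of X S" "\<forall>A\<in>S. countable A"
    using assms(1) unfolding omega_type_space_def by blast
  show "openin X (least_nbhd X x)"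
  proof (cases "\<exists>A\<in>S. x \<in> A")
    case True
    with S show ?thesis
      using openin_least_nbhd_if_countable_nbhd[OF assms(2)] unfolding subbase_of_def by blast
  next
    case False
    have "topspace X \<subseteq> U" if U: "openin X U" "x \<in> U" for U
    proof -
      obtain F where "finite F" "F \<subseteq> S" "x \<in> \<Inter>F" "topspace X \<inter> \<Inter>F \<subseteq> U"
        using subbase_of_local_basis[OF S(1) U] .
      with False have "F = {}" by blast
      with \<open>topspace X \<inter> \<Inter>F \<subseteq> U\<close> show ?thesis by simp
    qed
    then have "least_nbhd X x = topspace X"
      using x unfolding least_nbhd_def by blast
    then show ?thesis by simp
  qed
qed

lemma scott_open_upward:
  "scott_open L le U \<Longrightarrow> x \<in> U \<Longrightarrow> y \<in> L \<Longrightarrow> le x y \<Longrightarrow> y \<in> U"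
  unfolding scott_open_def by blast

lemma scott_open_inaccessible:
  "scott_open L le U \<Longrightarrow> directed_in L le D \<Longrightarrow> is_lub_in L le D s \<Longrightarrow> s \<in> U \<Longrightarrow> D \<inter> U \<noteq> {}"
  unfolding scott_open_def by blast

lemma istopology_scott_open: "istopology (scott_open L le)"
  unfolding istopology_def
proof (intro conjI allI impI)
  fix S T assume S: "scott_open L le S" and T: "scott_open L le T"
  show "scott_open L le (S \<inter> T)"
    unfolding scott_open_def
  proof (intro conjI allI impI ballI)
    show "S \<inter> T \<subseteq> L" "\<And>x y. x \<in> S \<inter> T \<Longrightarrow> y \<in> L \<Longrightarrow> le x y \<Longrightarrow> y \<in> S \<inter> T"
      using S T unfolding scott_open_def by blast+
  next
    fix D s assume H: "directed_in L le D \<and> is_lub_in L le D s \<and> s \<in> S \<inter> T"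
    then obtain a b where "a \<in> D" "a \<in> S" "b \<in> D" "b \<in> T"
      using S T unfolding scott_open_def by blast
    moreover obtain c where "c \<in> D" "le a c" "le b c"
      using H \<open>a \<in> D\<close> \<open>b \<in> D\<close> unfolding directed_in_def by blast
    moreover have "c \<in> L"
      using \<open>c \<in> D\<close> H unfolding directed_in_def by blast
    ultimately show "D \<inter> (S \<inter> T) \<noteq> {}"
      using S T unfolding scott_open_def by blast
  qed
next
  fix K assume K: "\<forall>S\<in>K. scott_open L le S"
  show "scott_open L le (\<Union>K)"
    unfolding scott_open_def
  proof (intro conjI allI impI ballI)
    show "\<Union>K \<subseteq> L" "\<And>x y. x \<in> \<Union>K \<Longrightarrow> y \<in> L \<Longrightarrow> le x y \<Longrightarrow> y \<in> \<Union>K"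
      using K unfolding scott_open_def by blast+
  next
    fix D s assume H: "directed_in L le D \<and> is_lub_in L le D s \<and> s \<in> \<Union>K"
    then obtain S where "S \<in> K" "s \<in> S" by blast
    with K H have "D \<inter> S \<noteq> {}"
      unfolding scott_open_def by blast
    with \<open>S \<in> K\<close> show "D \<inter> \<Union>K \<noteq> {}" by blast
  qed
qed

lemma openin_scott_topology: "openin (scott_topology L le) = scott_open L le"
  unfolding scott_topology_def by (rule topology_inverse'[OF istopology_scott_open])

definition prod_order :: "('a \<Rightarrow> 'a \<Rightarrow> bool) \<Rightarrow> ('b \<Rightarrow> 'b \<Rightarrow> bool) \<Rightarrow> 'a \<times> 'b \<Rightarrow> 'a \<times> 'b \<Rightarrow> bool"
  where "prod_order le1 le2 p q \<longleftrightarrow> le1 (fst p) (fst q) \<and> le2 (snd p) (snd q)"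

lemma directed_in_fst_image:
  "directed_in (L1 \<times> L2) (prod_order le1 le2) D \<Longrightarrow> directed_in L1 le1 (fst ` D)"
  unfolding directed_in_def prod_order_def by (fastforce simp: subset_iff)

lemma directed_in_snd_image:
  "directed_in (L1 \<times> L2) (prod_order le1 le2) D \<Longrightarrow> directed_in L2 le2 (snd ` D)"
  unfolding directed_in_def prod_order_def by (fastforce simp: subset_iff)

lemma is_lub_in_fst_image:
  assumes "is_lub_in (L1 \<times> L2) (prod_order le1 le2) D s"
  shows "is_lub_in L1 le1 (fst ` D) (fst s)"
  unfolding is_lub_in_def
proof (intro conjI ballI impI)
  fix u assume "u \<in> L1" "\<forall>x\<in>fst ` D. le1 x u"
  with assms have "prod_order le1 le2 s (u, snd s)"
    unfolding is_lub_in_def prod_order_def by (auto simp: mem_Times_iff)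
  then show "le1 (fst s) u"
    unfolding prod_order_def by simp
qed (use assms in \<open>auto simp: is_lub_in_def prod_order_def mem_Times_iff\<close>)

lemma is_lub_in_snd_image:
  assumes "is_lub_in (L1 \<times> L2) (prod_order le1 le2) D s"
  shows "is_lub_in L2 le2 (snd ` D) (snd s)"
  unfolding is_lub_in_def
proof (intro conjI ballI impI)
  fix u assume "u \<in> L2" "\<forall>x\<in>snd ` D. le2 x u"
  with assms have "prod_order le1 le2 s (fst s, u)"
    unfolding is_lub_in_def prod_order_def by (auto simp: mem_Times_iff)
  then show "le2 (snd s) u"
    unfolding prod_order_def by simp
qed (use assms in \<open>auto simp: is_lub_in_def prod_order_def mem_Times_iff\<close>)

lemma directed_in_Times:
  "directed_in L1 le1 D1 \<Longrightarrow> directed_in L2 le2 D2 \<Longrightarrow>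
    directed_in (L1 \<times> L2) (prod_order le1 le2) (D1 \<times> D2)"
  unfolding directed_in_def prod_order_def by (simp add: subset_iff) blast

lemma is_lub_in_Times:
  assumes "is_lub_in L1 le1 D1 s1" "is_lub_in L2 le2 D2 s2" "D1 \<noteq> {}" "D2 \<noteq> {}"
  shows "is_lub_in (L1 \<times> L2) (prod_order le1 le2) (D1 \<times> D2) (s1, s2)"
  using assms unfolding is_lub_in_def prod_order_def by (simp add: mem_Times_iff) blast

lemma scott_open_Times:
  assumes U: "scott_open L1 le1 U" and V: "scott_open L2 le2 V"
  shows "scott_open (L1 \<times> L2) (prod_order le1 le2) (U \<times> V)"
  unfolding scott_open_def
proof (intro conjI allI impI ballI)
  show "U \<times> V \<subseteq> L1 \<times> L2"
    using U V unfolding scott_open_def by blast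
  show "q \<in> U \<times> V" if "p \<in> U \<times> V" "q \<in> L1 \<times> L2" "prod_order le1 le2 p q" for p q
    using that U V unfolding scott_open_def prod_order_def by (auto simp: mem_Times_iff)
next
  fix D s
  assume H: "directed_in (L1 \<times> L2) (prod_order le1 le2) D \<and>
    is_lub_in (L1 \<times> L2) (prod_order le1 le2) D s \<and> s \<in> U \<times> V"
  then have "fst ` D \<inter> U \<noteq> {}"
    using U directed_in_fst_image is_lub_in_fst_image unfolding scott_open_def
    by (metis mem_Times_iff)
  moreover have "snd ` D \<inter> V \<noteq> {}"
    using H V directed_in_snd_image is_lub_in_snd_image unfolding scott_open_def
    by (metis mem_Times_iff)
  ultimately obtain d1 d2 where "d1 \<in> D" "fst d1 \<in> U" "d2 \<in> D" "snd d2 \<in> V"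
    by blast
  moreover obtain d where "d \<in> D" "prod_order le1 le2 d1 d" "prod_order le1 le2 d2 d"
    using H \<open>d1 \<in> D\<close> \<open>d2 \<in> D\<close> unfolding directed_in_def by blast
  moreover have "d \<in> L1 \<times> L2"
    using H \<open>d \<in> D\<close> unfolding directed_in_def by blast
  ultimately have "d \<in> U \<times> V"
    using U V unfolding scott_open_def prod_order_def by (auto simp: mem_Times_iff)
  with \<open>d \<in> D\<close> show "D \<inter> (U \<times> V) \<noteq> {}" by blast
qed

lemma openin_prod_scott_topology_imp_openin_scott_topology:
  assumes "openin (prod_topology (scott_topology L1 le1) (scott_topology L2 le2)) W"
  shows "openin (scott_topology (L1 \<times> L2) (prod_order le1 le2)) W"
proof (subst openin_subopen, intro ballI)
  fix p assume "p \<in> W"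
  with assms obtain U V where "scott_open L1 le1 U" "scott_open L2 le2 V" "p \<in> U \<times> V" "U \<times> V \<subseteq> W"
    unfolding openin_prod_topology_alt openin_scott_topology by (metis mem_Times_iff prod.collapse)
  then show "\<exists>T. openin (scott_topology (L1 \<times> L2) (prod_order le1 le2)) T \<and> p \<in> T \<and> T \<subseteq> W"
    using scott_open_Times unfolding openin_scott_topology by blast
qed

lemma is_lub_in_opens_iff:
  assumes "D \<subseteq> opens X"
  shows "is_lub_in (opens X) (\<subseteq>) D s \<longleftrightarrow> s = \<Union>D"
proof -
  have "\<Union>D \<in> opens X"
    using assms unfolding opens_def by auto
  then show ?thesis
    unfolding is_lub_in_def by blast
qed

lemma directed_in_finite_subset_Union:
  assumes D: "directed_in L (\<subseteq>) D" and "finite F" "F \<subseteq> \<Union>D"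
  shows "\<exists>d\<in>D. F \<subseteq> d"
  using \<open>finite F\<close> \<open>F \<subseteq> \<Union>D\<close>
proof (induction F rule: finite_induct)
  case empty
  with D show ?case by (auto simp: directed_in_def)
next
  case (insert x F)
  then have "F \<subseteq> \<Union>D" "x \<in> \<Union>D"
    by auto
  then obtain d d' where "d \<in> D" "F \<subseteq> d" "d' \<in> D" "x \<in> d'"
    using insert.IH by blast
  moreover obtain e where "e \<in> D" "d \<subseteq> e" "d' \<subseteq> e"
    using D \<open>d \<in> D\<close> \<open>d' \<in> D\<close> unfolding directed_in_def by blast
  ultimately show ?case by blast
qed

lemma scott_open_opens_containing_finite:
  assumes "finite F"
  shows "scott_open (opens X) (\<subseteq>) {U \<in> opens X. F \<subseteq> U}"
  unfolding scott_open_def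
proof (intro conjI allI impI ballI)
  fix D s
  assume H: "directed_in (opens X) (\<subseteq>) D \<and> is_lub_in (opens X) (\<subseteq>) D s \<and> s \<in> {U \<in> opens X. F \<subseteq> U}"
  then have "D \<subseteq> opens X"
    by (simp add: directed_in_def)
  with H have "F \<subseteq> \<Union>D"
    using is_lub_in_opens_iff by blast
  then obtain d where "d \<in> D" "F \<subseteq> d"
    using directed_in_finite_subset_Union H \<open>finite F\<close> by blast
  with \<open>D \<subseteq> opens X\<close> show "D \<inter> {U \<in> opens X. F \<subseteq> U} \<noteq> {}"
    by blast
qed auto

(* For Alexandrov X, the compact elements of the lattice O(X) below U. *)
definition finite_nbhd_unions :: "'a topology \<Rightarrow> 'a set \<Rightarrow> 'a set set" where
  "finite_nbhd_unions X U = {\<Union>(least_nbhd X ` F) | F. finite F \<and> F \<subseteq> U}"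

lemma finite_nbhd_unions_subset_opens:
  assumes "alexandrov_space X" "openin X U"
  shows "finite_nbhd_unions X U \<subseteq> opens X"
  using assms openin_subset
  unfolding finite_nbhd_unions_def alexandrov_space_def opens_def by blast

lemma directed_in_finite_nbhd_unions:
  assumes "alexandrov_space X" "openin X U"
  shows "directed_in (opens X) (\<subseteq>) (finite_nbhd_unions X U)"
  unfolding directed_in_def
proof (intro conjI ballI)
  show "finite_nbhd_unions X U \<subseteq> opens X"
    using finite_nbhd_unions_subset_opens[OF assms] .
  have "\<Union>(least_nbhd X ` {}) \<in> finite_nbhd_unions X U"
    unfolding finite_nbhd_unions_def by blast
  then show "finite_nbhd_unions X U \<noteq> {}"
    by blast
next
  fix K K' assume "K \<in> finite_nbhd_unions X U" "K' \<in> finite_nbhd_unions X U"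
  then obtain F F' where "finite F" "F \<subseteq> U" "K = \<Union>(least_nbhd X ` F)"
    and "finite F'" "F' \<subseteq> U" "K' = \<Union>(least_nbhd X ` F')"
    unfolding finite_nbhd_unions_def by blast
  then have "\<Union>(least_nbhd X ` (F \<union> F')) \<in> finite_nbhd_unions X U"
    and "K \<subseteq> \<Union>(least_nbhd X ` (F \<union> F'))" "K' \<subseteq> \<Union>(least_nbhd X ` (F \<union> F'))"
    unfolding finite_nbhd_unions_def by blast+
  then show "\<exists>L\<in>finite_nbhd_unions X U. K \<subseteq> L \<and> K' \<subseteq> L" by blast
qed

lemma is_lub_in_finite_nbhd_unions:
  assumes "alexandrov_space X" "openin X U"
  shows "is_lub_in (opens X) (\<subseteq>) (finite_nbhd_unions X U) U"
proof -
  have "\<Union>(finite_nbhd_unions X U) = U"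
  proof
    show "\<Union>(finite_nbhd_unions X U) \<subseteq> U"
    proof
      fix y assume "y \<in> \<Union>(finite_nbhd_unions X U)"
      then obtain x where "x \<in> U" "y \<in> least_nbhd X x"
        unfolding finite_nbhd_unions_def by blast
      then show "y \<in> U"
        using least_nbhd_subset[OF assms(2)] by blast
    qed
    show "U \<subseteq> \<Union>(finite_nbhd_unions X U)"
    proof
      fix x assume "x \<in> U"
      have "least_nbhd X x \<in> finite_nbhd_unions X U"
        unfolding finite_nbhd_unions_def
        using \<open>x \<in> U\<close> by (intro CollectI exI[of _ "{x}"]) simp
      then show "x \<in> \<Union>(finite_nbhd_unions X U)"
        by (rule UnionI[OF _ in_least_nbhd])
    qed
  qed
  then show ?thesis
    by (simp add: is_lub_in_opens_iff[OF finite_nbhd_unions_subset_opens[OF assms]])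
qed

lemma scott_open_opens_prod_imp_openin_prod_scott_topology:
  assumes X: "alexandrov_space X" and Y: "alexandrov_space Y"
    and W: "scott_open (opens X \<times> opens Y) (prod_order (\<subseteq>) (\<subseteq>)) W"
  shows "openin (prod_topology (scott_topology (opens X) (\<subseteq>)) (scott_topology (opens Y) (\<subseteq>))) W"
  unfolding openin_prod_topology_alt openin_scott_topology
proof (intro allI impI)
  fix U V assume "(U, V) \<in> W"
  moreover have "W \<subseteq> opens X \<times> opens Y"
    using W by (simp add: scott_open_def)
  ultimately have U: "openin X U" and V: "openin Y V"
    by (auto simp: opens_def)
  note dir_U = directed_in_finite_nbhd_unions[OF X U]
    and dir_V = directed_in_finite_nbhd_unions[OF Y V]
  have "is_lub_in (opens X \<times> opens Y) (prod_order (\<subseteq>) (\<subseteq>))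
          (finite_nbhd_unions X U \<times> finite_nbhd_unions Y V) (U, V)"
    using is_lub_in_Times[OF is_lub_in_finite_nbhd_unions[OF X U] is_lub_in_finite_nbhd_unions[OF Y V]]
      dir_U dir_V by (simp add: directed_in_def)
  from scott_open_inaccessible[OF W directed_in_Times[OF dir_U dir_V] this \<open>(U, V) \<in> W\<close>]
  obtain K L where "K \<in> finite_nbhd_unions X U" "L \<in> finite_nbhd_unions Y V" "(K, L) \<in> W"
    by auto
  then obtain F G where "finite F" "F \<subseteq> U" "finite G" "G \<subseteq> V"
    and FG: "(\<Union>(least_nbhd X ` F), \<Union>(least_nbhd Y ` G)) \<in> W"
    unfolding finite_nbhd_unions_def by auto
  have "{U' \<in> opens X. F \<subseteq> U'} \<times> {V' \<in> opens Y. G \<subseteq> V'} \<subseteq> W"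
  proof clarify
    fix U' V' assume U': "U' \<in> opens X" "F \<subseteq> U'" and V': "V' \<in> opens Y" "G \<subseteq> V'"
    then have "\<Union>(least_nbhd X ` F) \<subseteq> U'" "\<Union>(least_nbhd Y ` G) \<subseteq> V'"
      using least_nbhd_subset unfolding opens_def by (metis UN_least mem_Collect_eq subset_eq)+
    with FG U'(1) V'(1) show "(U', V') \<in> W"
      using scott_open_upward[OF W] by (simp add: prod_order_def)
  qed
  moreover have "U \<in> {U' \<in> opens X. F \<subseteq> U'}" "V \<in> {V' \<in> opens Y. G \<subseteq> V'}"
    using U V \<open>F \<subseteq> U\<close> \<open>G \<subseteq> V\<close> by (simp_all add: opens_def)
  ultimately show "\<exists>A B. scott_open (opens X) (\<subseteq>) A \<and> scott_open (opens Y) (\<subseteq>) B \<and>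
      U \<in> A \<and> V \<in> B \<and> A \<times> B \<subseteq> W"
    using scott_open_opens_containing_finite[OF \<open>finite F\<close>]
      scott_open_opens_containing_finite[OF \<open>finite G\<close>] by blast
qed

theorem theorem4p4:
  fixes X :: "'a topology" and Y :: "'b topology"
  assumes "omega_type_space X" and "P_space X"
    and "omega_type_space Y" and "P_space Y"
  shows "prod_topology (scott_topology (opens X) (\<subseteq>)) (scott_topology (opens Y) (\<subseteq>))
         = scott_topology (opens X \<times> opens Y)
             (\<lambda>p q. fst p \<subseteq> fst q \<and> snd p \<subseteq> snd q)"
proof -
  have "alexandrov_space X" "alexandrov_space Y"
    using omega_type_P_space_imp_alexandrov_space assms by blast+
  moreover have order: "prod_order (\<subseteq>) (\<subseteq>) = (\<lambda>p q. fst p \<subseteq> fst q \<and> snd p \<subseteq> snd q)"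
    by (simp add: fun_eq_iff prod_order_def)
  ultimately have "openin (prod_topology (scott_topology (opens X) (\<subseteq>)) (scott_topology (opens Y) (\<subseteq>))) W
      \<longleftrightarrow> openin (scott_topology (opens X \<times> opens Y) (\<lambda>p q. fst p \<subseteq> fst q \<and> snd p \<subseteq> snd q)) W"
    for W
    using openin_prod_scott_topology_imp_openin_scott_topology[of "opens X" "(\<subseteq>)" "opens Y" "(\<subseteq>)" W]
      scott_open_opens_prod_imp_openin_prod_scott_topology[of X Y W]
    unfolding order openin_scott_topology by blast
  then show ?thesis
    unfolding topology_eq by blast
qed

end
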